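(* Let $R$ be a commutative ring with $1$, $A\in M_n(R)$ and $B=\mathrm{diag}(b_1,\dots,b_n)$ with $b_i\in R$. Then $$T(A,B)=(-1)^{\lfloor n/2\rfloor}\,\Delta(A)\,\delta(b_1,\dots,b_n)^n.$$
   Context: $M(A,B)\in M_{n^2}(R)$ is the block matrix of $n\times n$ blocks whose $(i,j)$-th block is $A^{j-1}B^{i-1}$ ($i,j=1,\dots,n$), and $T(A,B)=\det M(A,B)$. For $A\in M_n(R)$ and $t\in\{1,\dots,n\}$, $M_t(A)$ is the $n\times n$ matrix whose $j$-th column is the $t$-th column of $A^{j-1}$ ($j=1,\dots,n$, $A^0=I$); $\Delta_t(A)=\det M_t(A)$ and $\Delta(A)=\prod_{t=1}^n\Delta_t(A)$. $\delta(x_1,\dots,x_n)=\prod_{s<t}(x_t-x_s)$ is the Vandermonde determinant. *)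

theory Defs
  imports "Jordan_Normal_Form.Determinant"
begin

text \<open>All indices are 0-based: paper index i (1..n) corresponds to i-1 here.\<close>

text \<open>M(A,B): the n^2 x n^2 block matrix whose (i,j) block (0-based) is A^j * B^i.\<close>
definition blockM :: "nat \<Rightarrow> 'a::comm_ring_1 mat \<Rightarrow> 'a mat \<Rightarrow> 'a mat" where
  "blockM n A B = mat (n * n) (n * n)
     (\<lambda>(r, c). ((A ^\<^sub>m (c div n)) * (B ^\<^sub>m (r div n))) $$ (r mod n, c mod n))"

definition T :: "nat \<Rightarrow> 'a::comm_ring_1 mat \<Rightarrow> 'a mat \<Rightarrow> 'a" where
  "T n A B = det (blockM n A B)"

definition Mt :: "nat \<Rightarrow> 'a::comm_ring_1 mat \<Rightarrow> nat \<Rightarrow> 'a mat" where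
  "Mt n A t = mat n n (\<lambda>(p, j). (A ^\<^sub>m j) $$ (p, t))"

definition Delta_t :: "nat \<Rightarrow> 'a::comm_ring_1 mat \<Rightarrow> nat \<Rightarrow> 'a" where
  "Delta_t n A t = det (Mt n A t)"

definition Delta :: "nat \<Rightarrow> 'a::comm_ring_1 mat \<Rightarrow> 'a" where
  "Delta n A = (\<Prod>t<n. Delta_t n A t)"

definition vdm :: "nat \<Rightarrow> (nat \<Rightarrow> 'a::comm_ring_1) \<Rightarrow> 'a" where
  "vdm n x = (\<Prod>t<n. \<Prod>s<t. x t - x s)"

definition diagm :: "nat \<Rightarrow> (nat \<Rightarrow> 'a::comm_ring_1) \<Rightarrow> 'a mat" where
  "diagm n b = mat n n (\<lambda>(i, j). if i = j then b i else 0)"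

end

theory Submission
  imports Defs
begin

text \<open>
  For diagonal \<open>B\<close> the \<open>(p,q)\<close> entry of the block \<open>A\<^sup>j B\<^sup>i\<close> is \<open>(A\<^sup>j)\<^sub>p\<^sub>q b\<^sub>q\<^sup>i\<close>.
  Hence, once the columns of \<open>M(A,B)\<close> are reordered by transposing the \<open>n \<times> n\<close> grid of
  (block, position) indices, \<open>M(A,B)\<close> factors as \<open>W D\<close>: here \<open>W = V \<otimes> I\<^sub>n\<close> for the Vandermonde
  matrix \<open>V\<^sub>i\<^sub>q = b\<^sub>q\<^sup>i\<close>, and \<open>D\<close> is block diagonal with blocks \<open>M\<^sub>1(A), \<dots>, M\<^sub>n(A)\<close>, so
  \<open>det D = \<Delta>(A)\<close>. Conjugating \<open>W\<close> by the same grid transposition makes it block diagonal with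
  \<open>n\<close> copies of \<open>V\<close>, so \<open>det W = \<delta>(b)\<^sup>n\<close>. The grid transposition is an involution moving
  \<open>n\<^sup>2 - n\<close> indices, so its sign is \<open>(-1)\<^bsup>n(n-1)/2\<^esup> = (-1)\<^bsup>\<lfloor>n/2\<rfloor>\<^esup>\<close>.
\<close>

lemma det_permute_cols:
  fixes X :: "'a::comm_ring_1 mat"
  assumes X: "X \<in> carrier_mat N N" and p: "p permutes {0..<N}"
  shows "det (mat N N (\<lambda>(i, j). X $$ (i, p j))) = signof p * det X"
proof -
  have "mat N N (\<lambda>(i, j). X $$ (i, p j))
      = transpose_mat (mat N N (\<lambda>(i, j). transpose_mat X $$ (p i, j)))"
    using X p by (intro eq_matI) (auto simp: permutes_in_image)
  then have "det (mat N N (\<lambda>(i, j). X $$ (i, p j)))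
      = det (mat N N (\<lambda>(i, j). transpose_mat X $$ (p i, j)))"
    by (metis det_transpose mat_carrier)
  also have "\<dots> = signof p * det (transpose_mat X)"
    by (rule det_permute_rows[OF _ p]) (use X in auto)
  finally show ?thesis
    using X by (simp add: det_transpose)
qed

lemma det_permute_rows_and_cols:
  fixes X :: "'a::comm_ring_1 mat"
  assumes X: "X \<in> carrier_mat N N" and p: "p permutes {0..<N}"
  shows "det (mat N N (\<lambda>(i, j). X $$ (p i, p j))) = det X"
proof -
  let ?Y = "mat N N (\<lambda>(i, j). X $$ (i, p j))"
  have "mat N N (\<lambda>(i, j). X $$ (p i, p j)) = mat N N (\<lambda>(i, j). ?Y $$ (p i, j))"
    using X p by (intro eq_matI) (auto simp: permutes_in_image)
  also have "det \<dots> = signof p * det ?Y"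
    by (rule det_permute_rows[OF _ p]) auto
  also have "\<dots> = signof p * signof p * det X"
    using det_permute_cols[OF X p] by simp
  finally show ?thesis
    by (metis mult_1 of_int_1 of_int_mult sign_idempotent)
qed

lemma det_block_lower_triangular:
  fixes P Q R :: "nat \<Rightarrow> nat \<Rightarrow> 'a::comm_ring_1"
  shows "det (mat (k + m) (k + m) (\<lambda>(i, j). if i < k then (if j < k then P i j else 0)
            else (if j < k then Q i j else R (i - k) (j - k))))
         = det (mat k k (\<lambda>(i, j). P i j)) * det (mat m m (\<lambda>(i, j). R i j))"
proof (induction k arbitrary: P Q)
  case 0
  have "mat (0 + m) (0 + m) (\<lambda>(i, j). if i < 0 then (if j < 0 then P i j else 0)
            else (if j < 0 then Q i j else R (i - 0) (j - 0))) = mat m m (\<lambda>(i, j). R i j)"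
    by (intro eq_matI) auto
  then show ?case by simp
next
  case (Suc k)
  define X where "X = mat (Suc k + m) (Suc k + m) (\<lambda>(i, j).
      if i < Suc k then (if j < Suc k then P i j else 0)
      else (if j < Suc k then Q i j else R (i - Suc k) (j - Suc k)))"
  define Pm where "Pm = mat (Suc k) (Suc k) (\<lambda>(i, j). P i j)"
  define Rm where "Rm = mat m m (\<lambda>(i, j). R i j)"
  have X: "X \<in> carrier_mat (Suc k + m) (Suc k + m)" and Pm: "Pm \<in> carrier_mat (Suc k) (Suc k)"
    unfolding X_def Pm_def by simp_all
  have minor: "det (mat_delete X 0 j) = det (mat_delete Pm 0 j) * det Rm" if j: "j < Suc k" for j
  proof -
    define P' where "P' = (\<lambda>i j'. P (Suc i) (if j' < j then j' else Suc j'))"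
    define Q' where "Q' = (\<lambda>i j'. Q (Suc i) (if j' < j then j' else Suc j'))"
    have "mat_delete X 0 j = mat (k + m) (k + m) (\<lambda>(i, j'). if i < k then (if j' < k then P' i j' else 0)
            else (if j' < k then Q' i j' else R (i - k) (j' - k)))"
      using j unfolding X_def P'_def Q'_def mat_delete_def
      by (intro eq_matI) (auto simp: Suc_diff_le)
    moreover have "mat k k (\<lambda>(i, j). P' i j) = mat_delete Pm 0 j"
      unfolding Pm_def P'_def mat_delete_def using j by (intro eq_matI) auto
    ultimately show ?thesis
      using Suc.IH unfolding Rm_def by simp
  qed
  have "det X = (\<Sum>j<Suc k + m. X $$ (0, j) * cofactor X 0 j)"
    by (rule laplace_expansion_row[OF X]) simp
  also have "\<dots> = (\<Sum>j<Suc k. X $$ (0, j) * cofactor X 0 j)"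
    by (rule sum.mono_neutral_right) (auto simp: X_def)
  also have "\<dots> = (\<Sum>j<Suc k. Pm $$ (0, j) * cofactor Pm 0 j * det Rm)"
    using minor by (intro sum.cong) (auto simp: cofactor_def X_def Pm_def)
  also have "\<dots> = det Pm * det Rm"
    by (simp only: laplace_expansion_row[OF Pm, of 0] sum_distrib_right)
  finally show ?case
    unfolding X_def Pm_def Rm_def .
qed

lemma det_block_diagonal:
  fixes F :: "nat \<Rightarrow> nat \<Rightarrow> nat \<Rightarrow> 'a::comm_ring_1"
  shows "det (mat (n * m) (n * m) (\<lambda>(r, c).
            if r div m = c div m then F (r div m) (r mod m) (c mod m) else 0))
         = (\<Prod>q<n. det (mat m m (\<lambda>(i, j). F q i j)))"
proof (cases "m = 0")
  case True
  then show ?thesis by simp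
next
  case m: False
  show ?thesis
  proof (induction n arbitrary: F)
    case 0
    then show ?case by simp
  next
    case (Suc n)
    let ?D = "\<lambda>n F. mat (n * m) (n * m) (\<lambda>(r, c).
                 if r div m = c div m then F (r div m) (r mod m) (c mod m) else 0)"
    have "?D (Suc n) F = mat (m + n * m) (m + n * m) (\<lambda>(i, j).
            if i < m then (if j < m then F 0 i j else 0)
            else (if j < m then 0 else (\<lambda>r c. if r div m = c div m
              then F (Suc (r div m)) (r mod m) (c mod m) else 0) (i - m) (j - m)))"
      using m by (intro eq_matI) (auto simp: le_div_geq le_mod_geq)
    then have "det (?D (Suc n) F) = det (mat m m (\<lambda>(i, j). F 0 i j)) * det (?D n (\<lambda>q. F (Suc q)))"
      using det_block_lower_triangular[of m "n * m" "\<lambda>i j. F 0 i j" "\<lambda>i j. 0"] by simp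
    also have "\<dots> = (\<Prod>q<Suc n. det (mat m m (\<lambda>(i, j). F q i j)))"
      using Suc.IH[of "\<lambda>q. F (Suc q)"] by (simp only: prod.lessThan_Suc_shift)
    finally show ?case .
  qed
qed

lemma det_diag:
  "det (mat n n (\<lambda>(i, j). if i = j then d i else (0::'a::comm_ring_1))) = (\<Prod>i<n. d i)"
proof -
  let ?D = "mat n n (\<lambda>(i, j). if i = j then d i else (0::'a))"
  have "det ?D = prod_list (diag_mat ?D)"
    by (rule det_upper_triangular) auto
  also have "diag_mat ?D = map d [0..<n]"
    unfolding diag_mat_def by (intro map_cong) auto
  finally show ?thesis
    by (simp add: prod.distinct_set_conv_list[symmetric] atLeast0LessThan)
qed

lemma sign_involution:
  assumes "permutation p" "\<And>x. p (p x) = x" "card {x. p x \<noteq> x} = 2 * k"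
  shows "sign p = (-1) ^ k"
  using assms
proof (induction k arbitrary: p)
  case 0
  have "finite {x. p x \<noteq> x}"
    using 0(1) permutation by blast
  with 0(3) have "p = id"
    by auto
  then show ?case by simp
next
  case (Suc k)
  have fin: "finite {x. p x \<noteq> x}"
    using Suc(2) permutation by blast
  obtain x where x: "p x \<noteq> x"
    using Suc(4) by fastforce
  define y where "y = p x"
  have xy: "x \<noteq> y" "p y = x"
    using x Suc(3) unfolding y_def by auto
  have p_off_xy: "p z \<noteq> x \<and> p z \<noteq> y" if "z \<noteq> x" "z \<noteq> y" for z
    using Suc(3)[of z] xy that unfolding y_def by metis
  define q where "q = transpose x y \<circ> p"
  have q: "q z = (if z = x \<or> z = y then z else p z)" for z
    using p_off_xy[of z] xy unfolding q_def by (auto simp: y_def transpose_def)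
  have "permutation q"
    unfolding q_def by (intro permutation_compose permutation_swap_id Suc(2))
  moreover have "q (q z) = z" for z
    using q[of z] q[of "p z"] p_off_xy[of z] Suc(3)[of z] by auto
  moreover have "card {z. q z \<noteq> z} = 2 * k"
  proof -
    have "{z. q z \<noteq> z} = {z. p z \<noteq> z} - {x, y}"
      using q by auto
    then show ?thesis
      using Suc(4) xy x fin by (simp add: card_Diff_subset y_def)
  qed
  ultimately have "sign q = (-1) ^ k"
    using Suc.IH by blast
  moreover have "p = transpose x y \<circ> q"
    unfolding q_def by (simp add: comp_assoc[symmetric])
  then have "sign p = sign (transpose x y) * sign q"
    using sign_compose[OF permutation_swap_id \<open>permutation q\<close>] by simp
  ultimately show ?case
    using xy by (simp add: sign_swap_id)
qed

lemma neg_one_power_pairs: "(-1::int) ^ (n * (n - 1) div 2) = (-1) ^ (n div 2)"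
proof (induction n rule: nat_less_induct)
  case (1 n)
  show ?case
  proof (cases "n < 2")
    case True
    then show ?thesis by (cases n) auto
  next
    case False
    then obtain m where n: "n = Suc (Suc m)"
      by (metis add_2_eq_Suc le_add_diff_inverse not_less)
    have "n * (n - 1) = m * (m - 1) + 2 * (2 * m + 1)"
      unfolding n by (cases m) (auto simp: algebra_simps)
    moreover have "even (m * (m - 1))"
      by (cases "even m") auto
    ultimately have "n * (n - 1) div 2 = m * (m - 1) div 2 + (2 * m + 1)"
      by auto
    moreover have "(-1::int) ^ (m * (m - 1) div 2) = (-1) ^ (m div 2)"
      using 1 n by simp
    ultimately show ?thesis
      unfolding n by (simp add: power_add)
  qed
qed

lemma pair_index_less:
  fixes p q :: nat
  assumes "p < n" "q < m"
  shows "q * n + p < m * n"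
proof -
  have "q * n + p < Suc q * n"
    using assms(1) by simp
  also have "\<dots> \<le> m * n"
    using assms(2) by (intro mult_le_mono1) simp
  finally show ?thesis .
qed

definition grid_transpose :: "nat \<Rightarrow> nat \<Rightarrow> nat" where
  "grid_transpose n r = (if r < n * n then (r mod n) * n + r div n else r)"

lemma grid_transpose_index:
  assumes r: "r < n * n"
  shows "grid_transpose n r < n * n" "grid_transpose n r mod n = r div n"
    "grid_transpose n r div n = r mod n"
proof -
  have n: "n > 0"
    using r by (cases n) auto
  have "r div n < n" "r mod n < n"
    using r n by (simp_all add: less_mult_imp_div_less)
  then show "grid_transpose n r < n * n" "grid_transpose n r mod n = r div n"
    "grid_transpose n r div n = r mod n"
    using r n by (simp_all add: grid_transpose_def pair_index_less)
qed

lemma grid_transpose_involution: "grid_transpose n (grid_transpose n r) = r"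
  by (cases "r < n * n")
    (simp_all add: grid_transpose_index grid_transpose_def[of n "grid_transpose n r"],
     simp add: grid_transpose_def)

lemma grid_transpose_permutes: "grid_transpose n permutes {0..<n * n}"
  unfolding permutes_def
proof (intro conjI allI impI)
  fix x
  assume "x \<notin> {0..<n * n}"
  then show "grid_transpose n x = x"
    by (simp add: grid_transpose_def)
next
  fix y
  show "\<exists>!x. grid_transpose n x = y"
    by (rule ex1I[of _ "grid_transpose n y"])
      (auto simp: grid_transpose_involution dest: arg_cong[of _ _ "grid_transpose n"])
qed

lemma grid_transpose_moved:
  "{r. grid_transpose n r \<noteq> r} = {0..<n * n} - (\<lambda>j. j * n + j) ` {..<n}"
proof (intro equalityI subsetI)
  fix r
  assume "r \<in> {r. grid_transpose n r \<noteq> r}"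
  then have r: "r < n * n" "grid_transpose n r \<noteq> r"
    by (auto simp: grid_transpose_def split: if_splits)
  then show "r \<in> {0..<n * n} - (\<lambda>j. j * n + j) ` {..<n}"
    by (auto simp: grid_transpose_def)
next
  fix r
  assume r: "r \<in> {0..<n * n} - (\<lambda>j. j * n + j) ` {..<n}"
  then have "r < n * n" by simp
  have "grid_transpose n r \<noteq> r"
  proof
    assume "grid_transpose n r = r"
    then have "r mod n = r div n"
      using grid_transpose_index(2)[OF \<open>r < n * n\<close>] by simp
    then have "r = (r div n) * n + r div n"
      by (metis div_mult_mod_eq)
    moreover have "r div n < n"
      using \<open>r < n * n\<close> by (simp add: less_mult_imp_div_less)
    ultimately show False
      using r by auto
  qed
  then show "r \<in> {r. grid_transpose n r \<noteq> r}" by simp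
qed

lemma sign_grid_transpose: "sign (grid_transpose n) = (-1) ^ (n div 2)"
proof -
  have "inj_on (\<lambda>j. j * n + j) {..<n}"
    by (intro inj_onI) (metis mult_Suc_right mult.commute nat_mult_eq_cancel1 add.commute zero_less_Suc)
  moreover have "(\<lambda>j. j * n + j) ` {..<n} \<subseteq> {0..<n * n}"
    by (auto intro: pair_index_less)
  ultimately have "card {r. grid_transpose n r \<noteq> r} = n * n - n"
    unfolding grid_transpose_moved by (subst card_Diff_subset) (auto simp: card_image)
  also have "\<dots> = 2 * (n * (n - 1) div 2)"
    by (simp add: diff_mult_distrib2)
  finally have "sign (grid_transpose n) = (-1) ^ (n * (n - 1) div 2)"
    using sign_involution grid_transpose_involution grid_transpose_permutes permutation_permutes
    by blast
  then show ?thesis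
    using neg_one_power_pairs by simp
qed

lemma vdm_Suc: "vdm (Suc n) x = (\<Prod>q<n. x (Suc q) - x 0) * vdm n (\<lambda>q. x (Suc q))"
proof -
  have "vdm (Suc n) x = (\<Prod>t<n. \<Prod>s<Suc t. x (Suc t) - x s)"
    unfolding vdm_def by (simp add: prod.lessThan_Suc_shift del: prod.lessThan_Suc)
  also have "\<dots> = (\<Prod>t<n. (x (Suc t) - x 0) * (\<Prod>s<t. x (Suc t) - x (Suc s)))"
    by (simp add: prod.lessThan_Suc_shift del: prod.lessThan_Suc)
  also have "\<dots> = (\<Prod>q<n. x (Suc q) - x 0) * vdm n (\<lambda>q. x (Suc q))"
    unfolding vdm_def by (simp add: prod.distrib)
  finally show ?thesis .
qed

lemma vandermonde_row_reduction:
  fixes x :: "nat \<Rightarrow> 'a::comm_ring_1"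
  shows "mat (Suc n) (Suc n) (\<lambda>(i, k). if k = i then 1 else if Suc k = i then - x 0 else 0)
           * mat (Suc n) (Suc n) (\<lambda>(i, q). x q ^ i)
         = mat (Suc n) (Suc n) (\<lambda>(i, q). if i = 0 then 1 else x q ^ (i - 1) * (x q - x 0))"
    (is "?E * ?V = ?W")
proof (rule eq_matI)
  fix i q
  assume "i < dim_row ?W" "q < dim_col ?W"
  then have i: "i < Suc n" and q: "q < Suc n" by auto
  have "(?E * ?V) $$ (i, q) = (\<Sum>k\<in>{0..<Suc n}. ?E $$ (i, k) * ?V $$ (k, q))"
    using i q by (simp add: scalar_prod_def)
  also have "\<dots> = (\<Sum>k\<in>{0..<Suc n}. (if k = i then x q ^ i else 0)
                     + (if Suc k = i then - x 0 * x q ^ k else 0))"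
    using i q by (intro sum.cong) auto
  also have "\<dots> = x q ^ i + (\<Sum>k\<in>{0..<Suc n}. if Suc k = i then - x 0 * x q ^ k else 0)"
    using i by (simp add: sum.distrib)
  also have "\<dots> = ?W $$ (i, q)"
  proof (cases i)
    case (Suc i')
    then have "(\<Sum>k\<in>{0..<Suc n}. if Suc k = i then - x 0 * x q ^ k else 0) = - x 0 * x q ^ i'"
      using i by simp
    then show ?thesis
      using Suc i q by (simp add: algebra_simps)
  qed (use q in simp)
  finally show "(?E * ?V) $$ (i, q) = ?W $$ (i, q)" .
qed auto

lemma det_vandermonde_Suc:
  fixes x :: "nat \<Rightarrow> 'a::comm_ring_1"
  shows "det (mat (Suc n) (Suc n) (\<lambda>(i, q). x q ^ i))
         = det (mat n n (\<lambda>(i, q). x (Suc q) ^ i)) * (\<Prod>q<n. x (Suc q) - x 0)"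
proof -
  let ?E = "mat (Suc n) (Suc n) (\<lambda>(i, k). if k = i then 1 else if Suc k = i then - x 0 else 0)"
  let ?W = "mat (Suc n) (Suc n) (\<lambda>(i, q). if i = 0 then 1 else x q ^ (i - 1) * (x q - x 0))"
  have "det ?E = prod_list (diag_mat ?E)"
    by (rule det_lower_triangular[of "Suc n"]) auto
  also have "diag_mat ?E = map (\<lambda>_. 1) [0..<Suc n]"
    unfolding diag_mat_def by (intro map_cong) auto
  finally have "det ?E = 1"
    by (simp add: map_replicate_const)
  then have "det (mat (Suc n) (Suc n) (\<lambda>(i, q). x q ^ i)) = det ?W"
    using det_mult[of ?E "Suc n" "mat (Suc n) (Suc n) (\<lambda>(i, q). x q ^ i)"]
      vandermonde_row_reduction[of n x] by simp
  also have "\<dots> = (\<Sum>i<Suc n. ?W $$ (i, 0) * cofactor ?W i 0)"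
    by (rule laplace_expansion_column) auto
  also have "\<dots> = det (mat_delete ?W 0 0)"
    by (simp only: sum.lessThan_Suc_shift) (simp add: cofactor_def)
  also have "mat_delete ?W 0 0 = mat n n (\<lambda>(i, q). x (Suc q) ^ i)
      * mat n n (\<lambda>(i, j). if i = j then x (Suc i) - x 0 else 0)"
    by (intro eq_matI) (auto simp: mat_delete_def scalar_prod_def if_distrib[of "(*) _"] cong: if_cong)
  also have "det \<dots> = det (mat n n (\<lambda>(i, q). x (Suc q) ^ i)) * (\<Prod>q<n. x (Suc q) - x 0)"
    by (subst det_mult[of _ n]) (auto simp: det_diag)
  finally show ?thesis .
qed

lemma det_vandermonde:
  fixes x :: "nat \<Rightarrow> 'a::comm_ring_1"
  shows "det (mat n n (\<lambda>(i, q). x q ^ i)) = vdm n x"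
proof (induction n arbitrary: x)
  case 0
  then show ?case by (simp add: vdm_def)
next
  case (Suc n)
  then show ?case
    by (simp add: det_vandermonde_Suc vdm_Suc ac_simps)
qed

lemma diagm_power: "diagm n b ^\<^sub>m i = diagm n (\<lambda>k. b k ^ i)"
proof (induction i)
  case 0
  then show ?case
    unfolding diagm_def by (intro eq_matI) auto
next
  case (Suc i)
  then show ?case
    unfolding diagm_def
    by (intro eq_matI) (auto simp: scalar_prod_def if_distrib[of "(*) _"] cong: if_cong)
qed

lemma blockM_diagm_index:
  assumes A: "A \<in> carrier_mat n n" and r: "r < n * n" and c: "c < n * n"
  shows "blockM n A (diagm n b) $$ (r, c)
         = b (c mod n) ^ (r div n) * (A ^\<^sub>m (c div n)) $$ (r mod n, c mod n)"
proof -
  have "n > 0"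
    using r by (cases n) auto
  then show ?thesis
    using r c A unfolding blockM_def diagm_power unfolding diagm_def
    by (simp add: scalar_prod_def if_distrib[of "(*) _"] mult.commute cong: if_cong)
qed

definition vandermonde_kron :: "nat \<Rightarrow> (nat \<Rightarrow> 'a::comm_ring_1) \<Rightarrow> 'a mat" where
  "vandermonde_kron n b = mat (n * n) (n * n)
     (\<lambda>(r, c). if r mod n = c mod n then b (c div n) ^ (r div n) else 0)"

definition block_diag_Mt :: "nat \<Rightarrow> 'a::comm_ring_1 mat \<Rightarrow> 'a mat" where
  "block_diag_Mt n A = mat (n * n) (n * n)
     (\<lambda>(r, c). if r div n = c div n then Mt n A (r div n) $$ (r mod n, c mod n) else 0)"

lemma det_vandermonde_kron: "det (vandermonde_kron n b) = vdm n b ^ n"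
proof -
  have "det (vandermonde_kron n b) = det (mat (n * n) (n * n)
      (\<lambda>(r, c). vandermonde_kron n b $$ (grid_transpose n r, grid_transpose n c)))"
    by (rule det_permute_rows_and_cols[symmetric])
      (simp_all add: vandermonde_kron_def grid_transpose_permutes)
  also have "mat (n * n) (n * n)
      (\<lambda>(r, c). vandermonde_kron n b $$ (grid_transpose n r, grid_transpose n c))
    = mat (n * n) (n * n) (\<lambda>(r, c). if r div n = c div n then b (c mod n) ^ (r mod n) else 0)"
    by (intro eq_matI) (auto simp: vandermonde_kron_def grid_transpose_index)
  also have "det \<dots> = vdm n b ^ n"
    using det_block_diagonal[of n n "\<lambda>_ i j. b j ^ i"] by (simp add: det_vandermonde)
  finally show ?thesis .
qed

lemma det_block_diag_Mt: "det (block_diag_Mt n A) = Delta n A"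
proof -
  have "mat n n (\<lambda>(i, j). Mt n A q $$ (i, j)) = Mt n A q" for q
    by (intro eq_matI) (auto simp: Mt_def)
  then show ?thesis
    using det_block_diagonal[of n n "\<lambda>q i j. Mt n A q $$ (i, j)"]
    unfolding block_diag_Mt_def Delta_def Delta_t_def by simp
qed

lemma vandermonde_kron_mult_block_diag_Mt_index:
  assumes r: "r < n * n" and k: "k < n * n"
  shows "(vandermonde_kron n b * block_diag_Mt n A) $$ (r, k)
         = b (k div n) ^ (r div n) * (A ^\<^sub>m (k mod n)) $$ (r mod n, k div n)"
proof -
  have n: "n > 0"
    using r by (cases n) auto
  let ?l = "(k div n) * n + r mod n"
  have l: "?l < n * n"
    using n k by (simp add: pair_index_less less_mult_imp_div_less)
  have "(vandermonde_kron n b * block_diag_Mt n A) $$ (r, k)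
      = (\<Sum>l\<in>{0..<n * n}. vandermonde_kron n b $$ (r, l) * block_diag_Mt n A $$ (l, k))"
    using r k by (simp add: vandermonde_kron_def block_diag_Mt_def scalar_prod_def)
  also have "\<dots> = (\<Sum>l\<in>{0..<n * n}.
      if l = ?l then b (k div n) ^ (r div n) * (A ^\<^sub>m (k mod n)) $$ (r mod n, k div n) else 0)"
  proof (rule sum.cong[OF refl])
    fix l
    assume "l \<in> {0..<n * n}"
    moreover have "l mod n = r mod n \<and> l div n = k div n \<longleftrightarrow> l = ?l"
    proof
      assume "l mod n = r mod n \<and> l div n = k div n"
      then show "l = ?l"
        by (metis div_mult_mod_eq)
    qed (use n in simp)
    ultimately show "vandermonde_kron n b $$ (r, l) * block_diag_Mt n A $$ (l, k) = (if l = ?l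
        then b (k div n) ^ (r div n) * (A ^\<^sub>m (k mod n)) $$ (r mod n, k div n) else 0)"
      using r k n by (auto simp: vandermonde_kron_def block_diag_Mt_def Mt_def)
  qed
  also have "\<dots> = b (k div n) ^ (r div n) * (A ^\<^sub>m (k mod n)) $$ (r mod n, k div n)"
    using l by simp
  finally show ?thesis .
qed

lemma blockM_diagm_factorization:
  assumes "A \<in> carrier_mat n n"
  shows "blockM n A (diagm n b) = mat (n * n) (n * n)
           (\<lambda>(r, c). (vandermonde_kron n b * block_diag_Mt n A) $$ (r, grid_transpose n c))"
  using assms
  by (intro eq_matI) (auto simp: blockM_diagm_index vandermonde_kron_mult_block_diag_Mt_index
      grid_transpose_index, simp_all add: blockM_def)

theorem mainTheorem3:
  fixes A :: "'a::comm_ring_1 mat" and b :: "nat \<Rightarrow> 'a" and n :: nat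
  assumes "A \<in> carrier_mat n n"
  shows "T n A (diagm n b) = (-1) ^ (n div 2) * Delta n A * vdm n b ^ n"
proof -
  let ?W = "vandermonde_kron n b" and ?D = "block_diag_Mt n A"
  have W: "?W \<in> carrier_mat (n * n) (n * n)" and D: "?D \<in> carrier_mat (n * n) (n * n)"
    by (simp_all add: vandermonde_kron_def block_diag_Mt_def)
  have "T n A (diagm n b) = signof (grid_transpose n) * det (?W * ?D)"
    unfolding T_def blockM_diagm_factorization[OF assms]
    by (rule det_permute_cols) (use W D grid_transpose_permutes in auto)
  also have "\<dots> = (-1) ^ (n div 2) * (det ?W * det ?D)"
    using det_mult[OF W D] sign_grid_transpose[of n] by simp
  finally show ?thesis
    by (simp add: det_vandermonde_kron det_block_diag_Mt ac_simps)
qed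

end
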